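(* Let $L$ be a torsion-free abelian group of rank 1, $L^\vee=\operatorname{Hom}(L,\mathbf{Q}/\mathbf{Z})$ and $\operatorname{Tor}(L^\vee)$ its torsion subgroup. Let $S$ be the set of primes $p$ for which $L$ is $p$-divisible, and $\mu_{(S)}=\bigoplus_{p\notin S}\mathbf{Q}_p/\mathbf{Z}_p\subset\mathbf{Q}/\mathbf{Z}$ (the roots of unity of order prime to every $p\in S$). For $\xi\in\operatorname{Hom}(L,\widehat{\mathbf{Z}})$ define $\xi^\vee:\mathbf{Q}/\mathbf{Z}\to L^\vee$ by $\xi^\vee(r)(x)=r\cdot\xi(x)\in\mathbf{Q}/\mathbf{Z}$ (using the natural $\widehat{\mathbf{Z}}$-module structure of $\mathbf{Q}/\mathbf{Z}$; this is the Pontryagin dual of $\xi$). Then the following are equivalent: (1) $\xi$ generates the $\widehat{\mathbf{Z}}$-module $\operatorname{Hom}(L,\widehat{\mathbf{Z}})$; (2) the restriction of $\xi^\vee$ to $\mu_{(S)}$ is an isomorphism $\mu_{(S)}\xrightarrow{\sim}\operatorname{Tor}(L^\vee)$. *)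

theory Defs
  imports Complex_Main "HOL-Algebra.Group" "HOL-Computational_Algebra.Primes"
begin

text \<open>Torsion-free abelian group of rank 1 (multiplicative HOL-Algebra notation):
  commutative, torsion-free, nontrivial, and any two elements are Z-linearly dependent
  (so a maximal independent subset has exactly one element).\<close>
definition torsion_free_rank1 :: "('a, 'b) monoid_scheme \<Rightarrow> bool" where
  "torsion_free_rank1 L \<longleftrightarrow> comm_group L
     \<and> (\<forall>x\<in>carrier L. \<forall>n::nat. n > 0 \<and> x [^]\<^bsub>L\<^esub> n = \<one>\<^bsub>L\<^esub> \<longrightarrow> x = \<one>\<^bsub>L\<^esub>)
     \<and> (\<exists>x\<in>carrier L. x \<noteq> \<one>\<^bsub>L\<^esub>)
     \<and> (\<forall>x\<in>carrier L. \<forall>y\<in>carrier L. \<exists>(m::int) (n::int). (m \<noteq> 0 \<or> n \<noteq> 0)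
            \<and> x [^]\<^bsub>L\<^esub> m \<otimes>\<^bsub>L\<^esub> y [^]\<^bsub>L\<^esub> n = \<one>\<^bsub>L\<^esub>)"

text \<open>Profinite integers: compatible systems (a_n mod n)_{n \<ge> 1} = lim Z/nZ,
  component a_n represented in {0..<n}; a_0 = 0 by convention.\<close>
definition is_zhat :: "(nat \<Rightarrow> int) \<Rightarrow> bool" where
  "is_zhat a \<longleftrightarrow> a 0 = 0 \<and> (\<forall>n>0. 0 \<le> a n \<and> a n < int n)
     \<and> (\<forall>m n. 0 < m \<longrightarrow> 0 < n \<longrightarrow> m dvd n \<longrightarrow> a m = a n mod int m)"

definition zhat_add :: "(nat \<Rightarrow> int) \<Rightarrow> (nat \<Rightarrow> int) \<Rightarrow> (nat \<Rightarrow> int)" where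
  "zhat_add a b = (\<lambda>n. if n = 0 then 0 else (a n + b n) mod int n)"

definition zhat_mul :: "(nat \<Rightarrow> int) \<Rightarrow> (nat \<Rightarrow> int) \<Rightarrow> (nat \<Rightarrow> int)" where
  "zhat_mul a b = (\<lambda>n. if n = 0 then 0 else (a n * b n) mod int n)"

definition zhat_hom :: "('a, 'b) monoid_scheme \<Rightarrow> ('a \<Rightarrow> nat \<Rightarrow> int) \<Rightarrow> bool" where
  "zhat_hom L h \<longleftrightarrow> (\<forall>x\<in>carrier L. is_zhat (h x))
     \<and> (\<forall>x\<in>carrier L. \<forall>y\<in>carrier L. h (x \<otimes>\<^bsub>L\<^esub> y) = zhat_add (h x) (h y))"

definition zhat_generates :: "('a, 'b) monoid_scheme \<Rightarrow> ('a \<Rightarrow> nat \<Rightarrow> int) \<Rightarrow> bool" where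
  "zhat_generates L \<xi> \<longleftrightarrow> (\<forall>\<psi>. zhat_hom L \<psi> \<longrightarrow>
      (\<exists>a. is_zhat a \<and> (\<forall>x\<in>carrier L. \<psi> x = zhat_mul a (\<xi> x))))"

text \<open>Q/Z represented by rationals in [0,1).\<close>
definition QZ :: "rat set" where
  "QZ = {r. 0 \<le> r \<and> r < 1}"

definition qz_add :: "rat \<Rightarrow> rat \<Rightarrow> rat" where
  "qz_add r s = frac (r + s)"

definition qz_den :: "rat \<Rightarrow> nat" where
  "qz_den r = nat (snd (quotient_of r))"

text \<open>Natural Zhat-module structure on Q/Z: z \<cdot> (a/b) = z_b \<cdot> a/b.\<close>
definition zhat_act :: "(nat \<Rightarrow> int) \<Rightarrow> rat \<Rightarrow> rat" where
  "zhat_act z r = frac (of_int (z (qz_den r)) * r)"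

definition pontryagin_dual :: "('a, 'b) monoid_scheme \<Rightarrow> ('a \<Rightarrow> rat) set" where
  "pontryagin_dual L = {f. (\<forall>x\<in>carrier L. f x \<in> QZ) \<and> (\<forall>x. x \<notin> carrier L \<longrightarrow> f x = 0)
      \<and> (\<forall>x\<in>carrier L. \<forall>y\<in>carrier L. f (x \<otimes>\<^bsub>L\<^esub> y) = qz_add (f x) (f y))}"

definition dual_add :: "('a, 'b) monoid_scheme \<Rightarrow> ('a \<Rightarrow> rat) \<Rightarrow> ('a \<Rightarrow> rat) \<Rightarrow> ('a \<Rightarrow> rat)" where
  "dual_add L f g = (\<lambda>x. if x \<in> carrier L then qz_add (f x) (g x) else 0)"

definition tor_dual :: "('a, 'b) monoid_scheme \<Rightarrow> ('a \<Rightarrow> rat) set" where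
  "tor_dual L = {f \<in> pontryagin_dual L. \<exists>n::nat. n > 0 \<and> (\<forall>x\<in>carrier L. frac (of_nat n * f x) = 0)}"

definition divisible_primes :: "('a, 'b) monoid_scheme \<Rightarrow> nat set" where
  "divisible_primes L = {p. prime p \<and> (\<forall>x\<in>carrier L. \<exists>y\<in>carrier L. y [^]\<^bsub>L\<^esub> p = x)}"

definition mu_S :: "nat set \<Rightarrow> rat set" where
  "mu_S S = {r \<in> QZ. \<forall>p\<in>S. coprime p (qz_den r)}"

definition dual_map :: "('a, 'b) monoid_scheme \<Rightarrow> ('a \<Rightarrow> nat \<Rightarrow> int) \<Rightarrow> rat \<Rightarrow> ('a \<Rightarrow> rat)" where
  "dual_map L \<xi> r = (\<lambda>x. if x \<in> carrier L then zhat_act (\<xi> x) r else 0)"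

end

theory Submission
  imports Defs
begin

text \<open>
  Both conditions are equivalent to the following one: for every prime p outside S the
  reduction of \<xi> modulo p is nonzero. The key fact is that in a torsion-free group of
  rank one an element g that is not p-divisible for any prime p dividing n generates L/L^n,
  which is then cyclic of order n; such g exist whenever n is prime to S.

  If \<xi> vanishes modulo some prime p outside S, the indices of L modulo L^(p^v) assemble
  into a homomorphism L -> Z_p \<subseteq> Zhat that is not a multiple of \<xi>. Conversely, write
  n = s t with s an S-number and t prime to S: every homomorphism vanishes modulo s because
  L = L^s, and modulo t it is determined by its value at a generator of L/L^t, where \<xi>
  takes a unit value. This gives multipliers modulo every n, compatible by uniqueness.

  On the dual side, \<xi>^\<or>(1/p) vanishes exactly when \<xi> vanishes modulo p, which gives
  injectivity; the order n of a torsion character is prime to S, and as L/L^n is cyclic the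
  character is \<xi>^\<or>(r) for some r whose denominator divides n.
\<close>

section \<open>Elementary number theory\<close>

lemma coprime_int_if_no_common_prime_factor:
  fixes b :: int
  assumes "n > 0" and "\<And>p. prime p \<Longrightarrow> p dvd n \<Longrightarrow> \<not> int p dvd b"
  shows "coprime b (int n)"
proof (rule ccontr)
  assume "\<not> coprime b (int n)"
  define d where "d = gcd b (int n)"
  have "d > 0" using assms(1) by (simp add: d_def)
  moreover have "d \<noteq> 1" using \<open>\<not> coprime b (int n)\<close> by (simp add: d_def coprime_iff_gcd_eq_1)
  ultimately have "nat d \<noteq> 1" by simp
  then obtain p where p: "prime p" "p dvd nat d" using prime_factor_nat by blast
  then have "int p dvd d" using \<open>d > 0\<close> by (metis int_dvd_int_iff nat_0_le order_less_imp_le)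
  then have "int p dvd b" "int p dvd int n" unfolding d_def by (auto intro: dvd_trans)
  then show False using assms(2) p(1) by simp
qed

lemma coprime_int_if_prime_factors_separated:
  assumes "t > 0" and "\<And>p. prime p \<Longrightarrow> p dvd d \<Longrightarrow> p \<in> S"
    and "\<And>p. prime p \<Longrightarrow> p dvd t \<Longrightarrow> p \<notin> S"
  shows "coprime (int d) (int t)"
  using coprime_int_if_no_common_prime_factor[OF assms(1)] assms(2,3) by (metis int_dvd_int_iff)

lemma prime_factors_split:
  fixes S :: "nat set"
  assumes "n > 0"
  obtains s t where "n = s * t" "\<And>p. prime p \<Longrightarrow> p dvd s \<Longrightarrow> p \<in> S"
    "\<And>p. prime p \<Longrightarrow> p dvd t \<Longrightarrow> p \<notin> S"
proof -
  have "n > 0 \<longrightarrow> (\<exists>s t. n = s * t \<and> (\<forall>p. prime p \<longrightarrow> p dvd s \<longrightarrow> p \<in> S)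
      \<and> (\<forall>p. prime p \<longrightarrow> p dvd t \<longrightarrow> p \<notin> S))"
  proof (induction n rule: prime_divisors_induct)
    case (unit n)
    then show ?case by (intro impI exI[of _ 1]) auto
  next
    case (factor q n)
    show ?case
    proof
      assume "q * n > 0"
      then obtain s t where st: "n = s * t" "\<forall>p. prime p \<longrightarrow> p dvd s \<longrightarrow> p \<in> S"
        "\<forall>p. prime p \<longrightarrow> p dvd t \<longrightarrow> p \<notin> S"
        using factor.IH by auto
      have dvd_q: "p = q" if "prime p" "p dvd q" for p
        using that factor.hyps primes_dvd_imp_eq by blast
      show "\<exists>s t. q * n = s * t \<and> (\<forall>p. prime p \<longrightarrow> p dvd s \<longrightarrow> p \<in> S)
          \<and> (\<forall>p. prime p \<longrightarrow> p dvd t \<longrightarrow> p \<notin> S)"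
      proof (cases "q \<in> S")
        case True
        then show ?thesis using st dvd_q
          by (intro exI[of _ "q * s"] exI[of _ t]) (auto simp: prime_dvd_mult_iff)
      next
        case False
        then show ?thesis using st dvd_q
          by (intro exI[of _ s] exI[of _ "q * t"]) (auto simp: prime_dvd_mult_iff)
      qed
    qed
  qed simp
  then show ?thesis using assms that by blast
qed

lemma exists_crt_idempotent:
  fixes a b :: int
  assumes "coprime a b"
  shows "\<exists>e. a dvd e - 1 \<and> b dvd e"
proof -
  obtain u w where "u * a + w * b = 1"
    using bezout_int[of a b] assms by auto
  then have "w * b - 1 = a * (- u)" by (simp add: algebra_simps)
  then have "a dvd w * b - 1" by (metis dvd_triv_left)
  then show ?thesis by (intro exI[of _ "w * b"]) simp
qed

(* e n is the idempotent of Z/n projecting onto its p-primary part. *)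
lemma prime_power_idempotents:
  assumes p: "prime p"
  obtains e :: "nat \<Rightarrow> int" where
    "\<And>n. n > 0 \<Longrightarrow> int (p ^ multiplicity p n) dvd e n - 1"
    "\<And>n. n > 0 \<Longrightarrow> int (n div p ^ multiplicity p n) dvd e n"
    "\<And>m n. m > 0 \<Longrightarrow> m dvd n \<Longrightarrow> n > 0 \<Longrightarrow> int m dvd e n - e m"
proof -
  define P where "P n = p ^ multiplicity p n" for n
  define Q where "Q n = n div P n" for n
  have PQ: "P n * Q n = n" for n
    unfolding P_def Q_def using multiplicity_dvd[of p n] by simp
  have not_dvd_Q: "\<not> p dvd Q n" if "n > 0" for n
    unfolding Q_def P_def by (rule multiplicity_decompose) (use that p in auto)
  have coprime_PQ: "coprime (P n) (Q n)" if "n > 0" for n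
    unfolding P_def using prime_imp_power_coprime[OF p not_dvd_Q[OF that]] by (simp add: coprime_commute)
  have "\<exists>e. int (P n) dvd e - 1 \<and> int (Q n) dvd e" if "n > 0" for n
    using exists_crt_idempotent coprime_PQ[OF that] by simp
  then obtain e where e: "\<And>n. n > 0 \<Longrightarrow> int (P n) dvd e n - 1 \<and> int (Q n) dvd e n"
    by metis
  have "int m dvd e n - e m" if m: "m > 0" and mn: "m dvd n" and n: "n > 0" for m n
  proof -
    have "P m dvd P n"
      unfolding P_def by (intro le_imp_power_dvd dvd_imp_multiplicity_le mn) (use n in auto)
    then have "int (P m) dvd (e n - 1) - (e m - 1)"
      using e[OF m] e[OF n] by (meson dvd_diff dvd_trans int_dvd_int_iff)
    then have dvd_P: "int (P m) dvd e n - e m" by simp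
    have "Q m dvd P n * Q n"
      using PQ[of m] PQ[of n] mn by (metis dvd_trans dvd_triv_right)
    moreover have "coprime (Q m) (P n)"
      unfolding P_def using prime_imp_power_coprime[OF p not_dvd_Q[OF m]] by (simp add: coprime_commute)
    ultimately have "Q m dvd Q n" by (simp add: coprime_dvd_mult_right_iff)
    then have dvd_Q: "int (Q m) dvd e n - e m"
      using e[OF m] e[OF n] by (meson dvd_diff dvd_trans int_dvd_int_iff)
    have "int (P m) * int (Q m) dvd e n - e m"
      by (rule divides_mult[OF dvd_P dvd_Q]) (use coprime_PQ[OF m] in simp)
    then show ?thesis using PQ[of m] by (metis of_nat_mult)
  qed
  then show ?thesis using that e unfolding P_def Q_def by blast
qed

section \<open>Denominators and the action of Zhat on Q/Z\<close>

lemma frac_eq_frac_iff: "frac x = frac y \<longleftrightarrow> x - y \<in> \<int>"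
  for x y :: "'a :: floor_ceiling"
  by (metis frac_diff_eq frac_diff_zero frac_eq_0_iff)

lemma qz_den_pos: "qz_den r > 0"
  unfolding qz_den_def using quotient_of_denom_pos' by simp

lemma of_int_mult_in_Ints_iff_qz_den_dvd: "of_int k * r \<in> \<int> \<longleftrightarrow> int (qz_den r) dvd k"
proof -
  obtain a b where ab: "quotient_of r = (a, b)" by (cases "quotient_of r")
  have b: "b > 0" and r: "r = of_int a / of_int b" and den: "int (qz_den r) = b"
    using quotient_of_denom_pos[OF ab] quotient_of_div[OF ab] ab by (auto simp: qz_den_def)
  have "of_int k * r = of_int (k * a) / of_int b" using r by simp
  then have "of_int k * r \<in> \<int> \<longleftrightarrow> b dvd k * a"
    using b of_int_div_of_int_in_Ints_iff[of "k * a" b] by (simp del: of_int_mult)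
  also have "\<dots> \<longleftrightarrow> b dvd k"
    using quotient_of_coprime[OF ab] by (simp add: coprime_commute coprime_dvd_mult_left_iff)
  finally show ?thesis using den by simp
qed

lemma of_nat_mult_in_Ints_iff_qz_den_dvd: "of_nat n * r \<in> \<int> \<longleftrightarrow> qz_den r dvd n"
  using of_int_mult_in_Ints_iff_qz_den_dvd[of "int n" r] by simp

lemma of_int_mult_frac_in_Ints_iff: "of_int k * frac x \<in> \<int> \<longleftrightarrow> of_int k * x \<in> \<int>"
  for x :: "'a :: floor_ceiling"
proof -
  have "of_int k * frac x = of_int k * x - of_int (k * \<lfloor>x\<rfloor>)"
    by (simp add: frac_def algebra_simps)
  then show ?thesis by simp
qed

lemma qz_den_qz_add_dvd: "qz_den (qz_add r s) dvd qz_den r * qz_den s"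
proof -
  let ?N = "qz_den r * qz_den s"
  have "of_nat ?N * qz_add r s
      = of_nat (qz_den s) * (of_nat (qz_den r) * r) + of_nat (qz_den r) * (of_nat (qz_den s) * s)
        - of_int (int ?N * \<lfloor>r + s\<rfloor>)"
    unfolding qz_add_def frac_def by (simp add: algebra_simps)
  also have "\<dots> \<in> \<int>"
  proof -
    have "of_nat (qz_den r) * r \<in> \<int>" "of_nat (qz_den s) * s \<in> \<int>"
      by (simp_all add: of_nat_mult_in_Ints_iff_qz_den_dvd)
    then show ?thesis by (metis Ints_add Ints_diff Ints_mult Ints_of_int Ints_of_nat)
  qed
  finally show ?thesis unfolding of_nat_mult_in_Ints_iff_qz_den_dvd .
qed

lemma qz_den_zero [simp]: "qz_den 0 = 1"
  unfolding qz_den_def by simp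

lemma qz_den_diff_dvd: "qz_den (r - s) dvd qz_den r * qz_den s"
proof -
  have "of_nat (qz_den r) * r \<in> \<int>" "of_nat (qz_den s) * s \<in> \<int>"
    by (simp_all add: of_nat_mult_in_Ints_iff_qz_den_dvd)
  then have "of_nat (qz_den s) * (of_nat (qz_den r) * r) - of_nat (qz_den r) * (of_nat (qz_den s) * s) \<in> \<int>"
    by (metis Ints_diff Ints_mult Ints_of_nat)
  then show ?thesis
    unfolding of_nat_mult_in_Ints_iff_qz_den_dvd[symmetric] by (simp add: algebra_simps)
qed

lemma QZ_eq_if_diff_in_Ints:
  assumes "r \<in> QZ" "s \<in> QZ" "r - s \<in> \<int>"
  shows "r = s"
proof -
  obtain k where k: "r - s = of_int k" using assms(3) by (elim Ints_cases)
  have "-1 < r - s" "r - s < 1" using assms(1,2) unfolding QZ_def by auto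
  then have "-1 < k" "k < 1" unfolding k by simp_all
  then show ?thesis using k by simp
qed

lemma prime_dvd_qz_den_notin:
  assumes "r \<in> mu_S S" "prime p" "p dvd qz_den r"
  shows "p \<notin> S"
proof
  assume "p \<in> S"
  then have "coprime p (qz_den r)" using assms(1) unfolding mu_S_def by blast
  then show False using assms(2,3) by (meson coprime_common_divisor not_prime_unit dvd_refl)
qed

lemma qz_den_inverse_dvd: "qz_den (1 / of_nat n) dvd n"
  unfolding of_nat_mult_in_Ints_iff_qz_den_dvd[symmetric] by (cases "n = 0") simp_all

lemma inverse_prime_in_mu_S:
  assumes p: "prime p" "p \<notin> S" and S: "\<forall>q\<in>S. prime q"
  shows "1 / of_nat p \<in> mu_S S"
  unfolding mu_S_def QZ_def
proof (intro CollectI conjI ballI)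
  show "0 \<le> 1 / (of_nat p :: rat)" "1 / (of_nat p :: rat) < 1"
    using prime_gt_1_nat[OF p(1)] by simp_all
  fix q assume "q \<in> S"
  then have "q \<noteq> p" "prime q" using p(2) S by auto
  then have "coprime q p" using primes_coprime p(1) by blast
  then show "coprime q (qz_den (1 / of_nat p))"
    using coprime_divisors[OF dvd_refl qz_den_inverse_dvd] by blast
qed

lemma mod_div_in_mu_S:
  assumes n: "n > 0" and S: "\<forall>p\<in>S. coprime p n"
  shows "of_int (c mod int n) / of_nat n \<in> mu_S S"
proof -
  define r :: rat where "r = of_int (c mod int n) / of_nat n"
  have "of_nat n * r = of_int (c mod int n)" using n by (simp add: r_def)
  then have den_r: "qz_den r dvd n" unfolding of_nat_mult_in_Ints_iff_qz_den_dvd[symmetric] by simp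
  have "0 \<le> c mod int n" "c mod int n < int n" using n by simp_all
  then have "0 \<le> (of_int (c mod int n) :: rat)" "(of_int (c mod int n) :: rat) < of_nat n"
    by (simp, metis of_int_less_iff of_int_of_nat_eq)
  then have "0 \<le> r" "r < 1" using n unfolding r_def by simp_all
  moreover have "coprime p (qz_den r)" if "p \<in> S" for p
    using S that coprime_divisors[OF dvd_refl den_r] by blast
  ultimately show ?thesis unfolding mu_S_def QZ_def r_def by blast
qed

lemma is_zhat_dvd_diff:
  assumes "is_zhat z" "m > 0" "m dvd n" "n > 0"
  shows "int m dvd z n - z m"
  using assms unfolding is_zhat_def by (metis dvd_minus_mod)

lemma zhat_act_eq_frac:
  assumes z: "is_zhat z" and N: "N > 0" "qz_den r dvd N"
  shows "zhat_act z r = frac (of_int (z N) * r)"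
proof -
  have "of_int (z (qz_den r) - z N) * r \<in> \<int>"
    unfolding of_int_mult_in_Ints_iff_qz_den_dvd using is_zhat_dvd_diff[OF z qz_den_pos N(2,1)]
    by (simp add: dvd_diff_commute)
  then show ?thesis
    unfolding zhat_act_def frac_eq_frac_iff by (simp add: left_diff_distrib)
qed

lemma zhat_act_qz_add:
  assumes z: "is_zhat z"
  shows "zhat_act z (qz_add r s) = qz_add (zhat_act z r) (zhat_act z s)"
proof -
  define N where "N = qz_den r * qz_den s"
  have N: "N > 0" by (simp add: N_def qz_den_pos)
  have "zhat_act z (qz_add r s) = frac (of_int (z N) * frac (r + s))"
    using zhat_act_eq_frac[OF z N] qz_den_qz_add_dvd N_def by (simp add: qz_add_def)
  also have "\<dots> = frac (frac (of_int (z N) * r) + frac (of_int (z N) * s))"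
    unfolding frac_eq_frac_iff by (simp add: frac_def algebra_simps)
  also have "\<dots> = qz_add (zhat_act z r) (zhat_act z s)"
    using zhat_act_eq_frac[OF z N] N_def by (simp add: qz_add_def)
  finally show ?thesis .
qed

lemma zhat_act_zhat_add: "zhat_act (zhat_add a b) r = qz_add (zhat_act a r) (zhat_act b r)"
proof -
  define d where "d = qz_den r"
  have "int d dvd (a d + b d) mod int d - (a d + b d)"
    unfolding mod_eq_dvd_iff[symmetric] by simp
  then have "of_int (zhat_add a b d - (a d + b d)) * r \<in> \<int>"
    unfolding of_int_mult_in_Ints_iff_qz_den_dvd using qz_den_pos[of r] by (simp add: zhat_add_def d_def)
  then have "frac (of_int (zhat_add a b d) * r) = frac (of_int (a d) * r + of_int (b d) * r)"
    unfolding frac_eq_frac_iff by (simp add: left_diff_distrib distrib_right)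
  then show ?thesis unfolding zhat_act_def qz_add_def d_def by simp
qed

lemma zhat_act_in_QZ: "zhat_act z r \<in> QZ"
  unfolding zhat_act_def QZ_def by (simp add: frac_lt_1)

lemma zhat_act_zero [simp]: "zhat_act z 0 = 0"
  unfolding zhat_act_def by simp

lemma qz_den_mult_zhat_act_in_Ints: "of_nat (qz_den r) * zhat_act z r \<in> \<int>"
proof -
  have "of_int (z (qz_den r)) * (of_nat (qz_den r) * r) \<in> \<int>"
    by (rule Ints_mult[OF Ints_of_int]) (simp add: of_nat_mult_in_Ints_iff_qz_den_dvd)
  then have "of_int (int (qz_den r)) * (of_int (z (qz_den r)) * r) \<in> \<int>"
    by (simp add: mult.left_commute)
  then show ?thesis
    unfolding zhat_act_def
    using of_int_mult_frac_in_Ints_iff[of "int (qz_den r)" "of_int (z (qz_den r)) * r"] by simp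
qed

section \<open>Homomorphisms modulo n\<close>

definition hom_mod :: "('a, 'b) monoid_scheme \<Rightarrow> nat \<Rightarrow> ('a \<Rightarrow> int) \<Rightarrow> bool" where
  "hom_mod L n h \<longleftrightarrow> (\<forall>x\<in>carrier L. \<forall>y\<in>carrier L. int n dvd h (x \<otimes>\<^bsub>L\<^esub> y) - (h x + h y))"

lemma hom_mod_dvd: "hom_mod L n h \<Longrightarrow> m dvd n \<Longrightarrow> hom_mod L m h"
  unfolding hom_mod_def by (meson dvd_trans int_dvd_int_iff)

lemma hom_mod_mult_right:
  assumes "hom_mod L m h" and "int q dvd e"
  shows "hom_mod L (m * q) (\<lambda>x. h x * e)"
  unfolding hom_mod_def
proof (intro ballI)
  fix x y assume "x \<in> carrier L" "y \<in> carrier L"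
  then have "int m * int q dvd (h (x \<otimes>\<^bsub>L\<^esub> y) - (h x + h y)) * e"
    using assms unfolding hom_mod_def by (intro mult_dvd_mono) auto
  then show "int (m * q) dvd h (x \<otimes>\<^bsub>L\<^esub> y) * e - (h x * e + h y * e)"
    by (simp add: algebra_simps)
qed

lemma zhat_hom_is_zhat: "zhat_hom L \<xi> \<Longrightarrow> x \<in> carrier L \<Longrightarrow> is_zhat (\<xi> x)"
  unfolding zhat_hom_def by blast

lemma zhat_hom_component_hom_mod:
  assumes "zhat_hom L \<xi>" "n > 0"
  shows "hom_mod L n (\<lambda>x. \<xi> x n)"
  using assms unfolding hom_mod_def zhat_hom_def zhat_add_def
  by (auto simp: mod_eq_dvd_iff[symmetric])

context group
begin

lemma hom_mod_one:
  assumes "hom_mod G n h"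
  shows "int n dvd h \<one>"
proof -
  have "int n dvd h (\<one> \<otimes> \<one>) - (h \<one> + h \<one>)"
    using assms unfolding hom_mod_def by blast
  then show ?thesis by simp
qed

lemma hom_mod_int_pow:
  assumes h: "hom_mod G n h" and x: "x \<in> carrier G"
  shows "int n dvd h (x [^] (k::int)) - k * h x"
proof (induction k rule: int_induct[where k = 0])
  case base
  then show ?case using hom_mod_one[OF h] by simp
next
  case (step1 i)
  have "int n dvd h (x [^] i \<otimes> x) - (h (x [^] i) + h x)"
    using h x unfolding hom_mod_def by simp
  with step1.IH have "int n dvd (h (x [^] i \<otimes> x) - (h (x [^] i) + h x)) + (h (x [^] i) - i * h x)"
    by (rule dvd_add[rotated])
  moreover have "x [^] (i + 1) = x [^] i \<otimes> x"
    using x by (simp add: int_pow_mult)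
  ultimately show ?case by (simp add: algebra_simps)
next
  case (step2 i)
  have "x [^] (i - 1) \<otimes> x = x [^] i"
    using x int_pow_mult[OF x, of "i - 1" 1] by simp
  then have "int n dvd h (x [^] i) - (h (x [^] (i - 1)) + h x)"
    using h x unfolding hom_mod_def by (metis int_pow_closed)
  with step2.IH have "int n dvd (h (x [^] i) - i * h x) - (h (x [^] i) - (h (x [^] (i - 1)) + h x))"
    by (rule dvd_diff)
  then show ?case by (simp add: algebra_simps)
qed

lemma hom_mod_int_pow_mult:
  assumes h: "hom_mod G n h" and g: "g \<in> carrier G" and y: "y \<in> carrier G"
  shows "int n dvd h (g [^] k \<otimes> y [^] int n) - k * h g"
proof -
  have "int n dvd h (g [^] k \<otimes> y [^] int n) - (h (g [^] k) + h (y [^] int n))"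
    using h g y unfolding hom_mod_def by simp
  moreover have "int n dvd h (g [^] k) - k * h g" "int n dvd h (y [^] int n) - int n * h y"
    using hom_mod_int_pow[OF h] g y by auto
  ultimately have "int n dvd (h (g [^] k \<otimes> y [^] int n) - (h (g [^] k) + h (y [^] int n)))
      + (h (g [^] k) - k * h g) + (h (y [^] int n) - int n * h y) + int n * h y"
    by (intro dvd_add) simp_all
  then show ?thesis by (simp add: algebra_simps)
qed

end

lemma is_zhat_of_compatible:
  assumes "\<And>m n. m > 0 \<Longrightarrow> m dvd n \<Longrightarrow> n > 0 \<Longrightarrow> int m dvd c n - c m"
  shows "is_zhat (\<lambda>n. if n = 0 then 0 else c n mod int n)"
  unfolding is_zhat_def
proof (intro conjI allI impI)
  fix m n :: nat assume "0 < m" "0 < n" "m dvd n"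
  then have "c m mod int m = c n mod int m"
    using assms by (simp add: mod_eq_dvd_iff dvd_diff_commute)
  then show "(if m = 0 then 0 else c m mod int m) = (if n = 0 then 0 else c n mod int n) mod int m"
    using \<open>0 < m\<close> \<open>0 < n\<close> \<open>m dvd n\<close> by (simp add: mod_mod_cancel)
qed auto

lemma zhat_hom_of_compatible:
  assumes hom: "\<And>n. n > 0 \<Longrightarrow> hom_mod L n (h n)"
    and compat: "\<And>m n x. m > 0 \<Longrightarrow> m dvd n \<Longrightarrow> n > 0 \<Longrightarrow> x \<in> carrier L \<Longrightarrow> int m dvd h n x - h m x"
  shows "zhat_hom L (\<lambda>x n. if n = 0 then 0 else h n x mod int n)"
  unfolding zhat_hom_def
proof (intro conjI ballI ext)
  fix x assume "x \<in> carrier L"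
  then show "is_zhat (\<lambda>n. if n = 0 then 0 else h n x mod int n)"
    using compat by (intro is_zhat_of_compatible)
next
  fix x y n assume "x \<in> carrier L" "y \<in> carrier L"
  then have "n > 0 \<Longrightarrow> h n (x \<otimes>\<^bsub>L\<^esub> y) mod int n = (h n x + h n y) mod int n"
    using hom unfolding hom_mod_def by (simp add: mod_eq_dvd_iff)
  then show "(if n = 0 then 0 else h n (x \<otimes>\<^bsub>L\<^esub> y) mod int n)
      = zhat_add (\<lambda>n. if n = 0 then 0 else h n x mod int n) (\<lambda>n. if n = 0 then 0 else h n y mod int n) n"
    unfolding zhat_add_def by (simp add: mod_add_eq)
qed

(* k is a homomorphism from L to the p-adic integers lim Z/p^v; compose it with Z_p \<subseteq> Zhat. *)
lemma zhat_hom_of_prime_power_family: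
  assumes p: "prime p"
    and hom: "\<And>v. hom_mod L (p ^ v) (k v)"
    and compat: "\<And>v w x. v \<le> w \<Longrightarrow> x \<in> carrier L \<Longrightarrow> int (p ^ v) dvd k w x - k v x"
  obtains \<psi> where "zhat_hom L \<psi>" "\<And>x. x \<in> carrier L \<Longrightarrow> \<psi> x p = k 1 x mod int p"
proof -
  obtain e where e_one: "\<And>n. n > 0 \<Longrightarrow> int (p ^ multiplicity p n) dvd e n - 1"
    and e_zero: "\<And>n. n > 0 \<Longrightarrow> int (n div p ^ multiplicity p n) dvd e n"
    and e_compat: "\<And>m n. m > 0 \<Longrightarrow> m dvd n \<Longrightarrow> n > 0 \<Longrightarrow> int m dvd e n - e m"
    using prime_power_idempotents[OF p] by blast
  define h where "h n x = k (multiplicity p n) x * e n" for n x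
  have split: "int n = int (p ^ multiplicity p n) * int (n div p ^ multiplicity p n)" for n
    using multiplicity_dvd[of p n] by (metis dvd_mult_div_cancel of_nat_mult)
  have "hom_mod L n (h n)" if n: "n > 0" for n
    using hom_mod_mult_right[OF hom[of "multiplicity p n"] e_zero[OF n]] multiplicity_dvd[of p n]
    unfolding h_def by simp
  moreover have "int m dvd h n x - h m x"
    if m: "m > 0" and mn: "m dvd n" and n: "n > 0" and x: "x \<in> carrier L" for m n x
  proof -
    have "multiplicity p m \<le> multiplicity p n"
      by (rule dvd_imp_multiplicity_le[OF mn]) (use n in auto)
    then have "int (p ^ multiplicity p m) * int (m div p ^ multiplicity p m)
        dvd (k (multiplicity p n) x - k (multiplicity p m) x) * e m"
      using compat x e_zero[OF m] by (intro mult_dvd_mono) auto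
    moreover have "int m dvd k (multiplicity p n) x * (e n - e m)"
      using e_compat[OF m mn n] by simp
    ultimately have "int m dvd (k (multiplicity p n) x - k (multiplicity p m) x) * e m
        + k (multiplicity p n) x * (e n - e m)"
      unfolding split[of m, symmetric] by (rule dvd_add)
    then show ?thesis unfolding h_def by (simp add: algebra_simps)
  qed
  ultimately have "zhat_hom L (\<lambda>x n. if n = 0 then 0 else h n x mod int n)"
    by (rule zhat_hom_of_compatible)
  moreover have "h p x mod int p = k 1 x mod int p" for x
  proof -
    have "int p dvd e p - 1" using e_one[of p] p by (simp add: prime_gt_0_nat)
    then have "int p dvd k 1 x * (e p - 1)" by simp
    then show ?thesis using p unfolding h_def by (simp add: mod_eq_dvd_iff algebra_simps)
  qed
  ultimately show ?thesis using that[of "\<lambda>x n. if n = 0 then 0 else h n x mod int n"] p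
    by (simp add: prime_gt_0_nat)
qed

section \<open>Divisibility\<close>

definition divisible_by :: "('a, 'b) monoid_scheme \<Rightarrow> nat \<Rightarrow> 'a \<Rightarrow> bool" where
  "divisible_by L n x \<longleftrightarrow> (\<exists>y\<in>carrier L. y [^]\<^bsub>L\<^esub> n = x)"

lemma divisible_primes_iff:
  "p \<in> divisible_primes L \<longleftrightarrow> prime p \<and> (\<forall>x\<in>carrier L. divisible_by L p x)"
  unfolding divisible_primes_def divisible_by_def by simp

(* In rank at most one such a g generates L/L^n, which is then cyclic of order n. *)
definition nondivisible_at :: "('a, 'b) monoid_scheme \<Rightarrow> nat \<Rightarrow> 'a \<Rightarrow> bool" where
  "nondivisible_at L n g \<longleftrightarrow> g \<in> carrier L \<and> (\<forall>p. prime p \<longrightarrow> p dvd n \<longrightarrow> \<not> divisible_by L p g)"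

lemma nondivisible_at_dvd: "nondivisible_at L n g \<Longrightarrow> m dvd n \<Longrightarrow> nondivisible_at L m g"
  unfolding nondivisible_at_def by (meson dvd_trans)

context comm_group
begin

lemma divisible_by_int_pow_mult: "y \<in> carrier G \<Longrightarrow> divisible_by G n (y [^] (int n * k))"
  unfolding divisible_by_def by (metis int_pow_closed int_pow_int int_pow_pow mult.commute)

lemma divisible_by_mult:
  "divisible_by G n x \<Longrightarrow> divisible_by G n y \<Longrightarrow> divisible_by G n (x \<otimes> y)"
  unfolding divisible_by_def by (metis m_closed m_comm pow_mult_distrib)

lemma divisible_by_mult_iff:
  assumes "divisible_by G n y" "x \<in> carrier G" "y \<in> carrier G"
  shows "divisible_by G n (x \<otimes> y) \<longleftrightarrow> divisible_by G n x"
proof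
  assume "divisible_by G n (x \<otimes> y)"
  moreover have "divisible_by G n (inv y)"
    using assms(1) unfolding divisible_by_def by (metis inv_closed nat_pow_inv)
  ultimately have "divisible_by G n (x \<otimes> y \<otimes> inv y)" by (rule divisible_by_mult)
  then show "divisible_by G n x" using assms(2,3) by (simp add: m_assoc)
qed (use assms divisible_by_mult in blast)

lemma divisible_by_of_coprime_int_pow:
  assumes "coprime k (int n)" and x: "x \<in> carrier G" and "divisible_by G n (x [^] k)"
  shows "divisible_by G n x"
proof -
  obtain u v where uv: "u * k + v * int n = 1"
    using bezout_int[of k "int n"] assms(1) by auto
  have "x = x [^] (u * k + v * int n)" using x uv by simp
  also have "\<dots> = (x [^] k) [^] u \<otimes> x [^] (int n * v)"
    using x by (simp add: int_pow_mult int_pow_pow mult.commute)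
  finally have "x = (x [^] k) [^] u \<otimes> x [^] (int n * v)" .
  moreover have "divisible_by G n ((x [^] k) [^] u)"
    using assms(3) unfolding divisible_by_def by (metis int_pow_closed int_pow_int int_pow_pow mult.commute)
  ultimately show ?thesis using x divisible_by_mult divisible_by_int_pow_mult by metis
qed

lemma divisible_by_prime_factors:
  assumes "d > 0" and "\<And>p. prime p \<Longrightarrow> p dvd d \<Longrightarrow> p \<in> divisible_primes G" and "x \<in> carrier G"
  shows "divisible_by G d x"
proof -
  have "d > 0 \<longrightarrow> (\<forall>p. prime p \<longrightarrow> p dvd d \<longrightarrow> p \<in> divisible_primes G)
      \<longrightarrow> (\<forall>x\<in>carrier G. divisible_by G d x)"
  proof (induction d rule: prime_divisors_induct)
    case (unit d)
    then show ?case unfolding divisible_by_def by auto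
  next
    case (factor q d)
    show ?case
    proof (intro impI ballI)
      fix x assume "q * d > 0" and S: "\<forall>p. prime p \<longrightarrow> p dvd q * d \<longrightarrow> p \<in> divisible_primes G"
        and x: "x \<in> carrier G"
      then obtain y where y: "y \<in> carrier G" "y [^] d = x"
        using factor.IH unfolding divisible_by_def by auto
      have "q \<in> divisible_primes G" using S factor.hyps by simp
      then obtain z where "z \<in> carrier G" "z [^] q = y"
        using y(1) unfolding divisible_primes_def by auto
      then show "divisible_by G (q * d) x"
        unfolding divisible_by_def using y by (metis nat_pow_pow)
    qed
  qed simp
  then show ?thesis using assms by blast
qed

lemma hom_mod_vanishes_on_divisible_part:
  assumes h: "hom_mod G m h" and "d dvd m" "d > 0"
    and "\<And>p. prime p \<Longrightarrow> p dvd d \<Longrightarrow> p \<in> divisible_primes G" and x: "x \<in> carrier G"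
  shows "int d dvd h x"
proof -
  obtain y where y: "y \<in> carrier G" "x = y [^] int d"
    using divisible_by_prime_factors[OF assms(3,4) x] unfolding divisible_by_def
    by (metis int_pow_int)
  have "int d dvd h x - int d * h y"
    using hom_mod_int_pow[OF hom_mod_dvd[OF h \<open>d dvd m\<close>] y(1)] y(2) by simp
  then show ?thesis by (metis dvd_add_right_iff dvd_triv_left diff_add_cancel)
qed

lemma exists_nondivisible_at_prime_mult:
  assumes g: "nondivisible_at G n g" and q: "prime q" "q \<notin> divisible_primes G"
  shows "\<exists>g'. nondivisible_at G (q * n) g'"
proof -
  have g_carrier: "g \<in> carrier G" using g unfolding nondivisible_at_def by simp
  have dvd_qn: "p = q \<or> p dvd n" if "prime p" "p dvd q * n" for p
    using that q(1) primes_dvd_imp_eq by (auto simp: prime_dvd_mult_iff)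
  show ?thesis
  proof (cases "divisible_by G q g")
    case False
    then show ?thesis using g dvd_qn unfolding nondivisible_at_def by blast
  next
    case True
    obtain x where x: "x \<in> carrier G" "\<not> divisible_by G q x"
      using q unfolding divisible_primes_iff by auto
    have "\<not> q dvd n" using g True q(1) unfolding nondivisible_at_def by blast
    have "\<not> divisible_by G p (g \<otimes> x [^] int n)" if p: "prime p" "p dvd q * n" for p
    proof (cases "p = q")
      case True
      have "coprime (int n) (int q)"
        using prime_imp_coprime[OF q(1) \<open>\<not> q dvd n\<close>] by (simp add: coprime_commute)
      then have "\<not> divisible_by G q (x [^] int n)"
        using divisible_by_of_coprime_int_pow x by blast
      then show ?thesis
        using \<open>divisible_by G q g\<close> True g_carrier x
        by (metis divisible_by_mult_iff int_pow_closed m_comm)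
    next
      case False
      then have "p dvd n" using dvd_qn p by blast
      then have "divisible_by G p (x [^] int n)"
        using divisible_by_int_pow_mult[OF x(1)] by (metis dvdE of_nat_mult)
      then show ?thesis
        using divisible_by_mult_iff g g_carrier x \<open>p dvd n\<close> p(1)
        unfolding nondivisible_at_def by (metis int_pow_closed)
    qed
    then show ?thesis using g_carrier x(1) unfolding nondivisible_at_def by blast
  qed
qed

lemma exists_nondivisible_at:
  assumes "n > 0" and "\<And>p. prime p \<Longrightarrow> p dvd n \<Longrightarrow> p \<notin> divisible_primes G"
  obtains g where "nondivisible_at G n g"
proof -
  have "n > 0 \<longrightarrow> (\<forall>p. prime p \<longrightarrow> p dvd n \<longrightarrow> p \<notin> divisible_primes G)
      \<longrightarrow> (\<exists>g. nondivisible_at G n g)"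
  proof (induction n rule: prime_divisors_induct)
    case (unit n)
    then show ?case
      unfolding nondivisible_at_def by (metis dvd_unit_imp_unit not_prime_unit one_closed)
  next
    case (factor q n)
    show ?case
    proof (intro impI)
      assume "q * n > 0" and S: "\<forall>p. prime p \<longrightarrow> p dvd q * n \<longrightarrow> p \<notin> divisible_primes G"
      then obtain g where "nondivisible_at G n g" using factor.IH by auto
      moreover have "q \<notin> divisible_primes G" using S factor.hyps by simp
      ultimately show "\<exists>g. nondivisible_at G (q * n) g"
        using exists_nondivisible_at_prime_mult factor.hyps by blast
    qed
  qed simp
  then show ?thesis using assms that by blast
qed

end

section \<open>Torsion-free groups of rank at most one\<close>

locale torsion_free_rank_le_one = comm_group L for L (structure) +
  assumes torsion_free: "\<lbrakk>x \<in> carrier L; n > 0; x [^] (n::nat) = \<one>\<rbrakk> \<Longrightarrow> x = \<one>"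
    and rank_le_one: "\<lbrakk>x \<in> carrier L; y \<in> carrier L\<rbrakk>
      \<Longrightarrow> \<exists>(m::int) (n::int). (m \<noteq> 0 \<or> n \<noteq> 0) \<and> x [^] m \<otimes> y [^] n = \<one>"

lemma torsion_free_rank1_imp_rank_le_one:
  "torsion_free_rank1 L \<Longrightarrow> torsion_free_rank_le_one L"
  unfolding torsion_free_rank1_def torsion_free_rank_le_one_def torsion_free_rank_le_one_axioms_def
  by blast

context torsion_free_rank_le_one
begin

lemma int_pow_eq_one_imp_one:
  assumes x: "x \<in> carrier L" and "k \<noteq> 0" and "x [^] (k::int) = \<one>"
  shows "x = \<one>"
proof -
  have "x [^] (-k) = \<one>" using assms by (simp add: int_pow_neg)
  then have "x [^] nat \<bar>k\<bar> = \<one>"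
    using assms(3) by (cases "k \<ge> 0") (simp_all add: pow_nat)
  from torsion_free[OF x _ this] show ?thesis using \<open>k \<noteq> 0\<close> by simp
qed

lemma int_pow_cancel:
  assumes x: "x \<in> carrier L" and y: "y \<in> carrier L" and "k \<noteq> 0" and "x [^] (k::int) = y [^] k"
  shows "x = y"
proof -
  have "(x \<otimes> inv y) [^] k = \<one>"
    using assms by (simp add: int_pow_distrib int_pow_inv)
  then have "x \<otimes> inv y = \<one>" using int_pow_eq_one_imp_one x y \<open>k \<noteq> 0\<close> by simp
  then show ?thesis using x y by (metis inv_equality inv_inv inv_closed)
qed

lemma coprime_power_relation:
  assumes x: "x \<in> carrier L" and g: "g \<in> carrier L" and "g \<noteq> \<one>"
  obtains a b :: int where "b \<noteq> 0" "coprime a b" "x [^] b = g [^] a"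
proof -
  obtain m m' :: int where nontrivial: "m \<noteq> 0 \<or> m' \<noteq> 0" and rel: "x [^] m \<otimes> g [^] m' = \<one>"
    using rank_le_one[OF x g] by blast
  have "m \<noteq> 0"
  proof
    assume "m = 0"
    then have "g [^] m' = \<one>" "m' \<noteq> 0" using rel nontrivial g by auto
    then show False using int_pow_eq_one_imp_one[OF g] \<open>g \<noteq> \<one>\<close> by blast
  qed
  have xg: "x [^] m = g [^] (- m')"
    using inv_equality[OF rel] x g by (simp add: int_pow_neg)
  define d where "d = gcd (- m') m"
  have "d \<noteq> 0" using \<open>m \<noteq> 0\<close> by (simp add: d_def)
  have "(x [^] (m div d)) [^] d = (g [^] (- m' div d)) [^] d"
    using xg x g by (simp add: int_pow_pow d_def)
  then have "x [^] (m div d) = g [^] (- m' div d)"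
    using int_pow_cancel x g \<open>d \<noteq> 0\<close> by simp
  moreover have "coprime (- m' div d) (m div d)"
    unfolding d_def using \<open>m \<noteq> 0\<close> by (intro div_gcd_coprime) simp
  moreover have "m div d \<noteq> 0"
    using \<open>m \<noteq> 0\<close> d_def by (metis dvd_div_eq_0_iff gcd_dvd2)
  ultimately show ?thesis using that by blast
qed

lemma decompose_mod_prime:
  assumes p: "prime p" and g: "g \<in> carrier L" "\<not> divisible_by L p g" and x: "x \<in> carrier L"
  obtains k y where "y \<in> carrier L" "x = g [^] (k::int) \<otimes> y [^] int p"
proof -
  have "g \<noteq> \<one>" using g(2) unfolding divisible_by_def by (metis nat_pow_one one_closed)
  then obtain a b :: int where "b \<noteq> 0" "coprime a b" and xg: "x [^] b = g [^] a"
    using coprime_power_relation[OF x g(1)] by blast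
  have "\<not> int p dvd b"
  proof
    assume "int p dvd b"
    then obtain c where "b = int p * c" ..
    then have "divisible_by L p (g [^] a)" using xg divisible_by_int_pow_mult[OF x, of p c] by simp
    moreover have "coprime a (int p)"
      using coprime_divisors[OF dvd_refl \<open>int p dvd b\<close> \<open>coprime a b\<close>] .
    ultimately show False using divisible_by_of_coprime_int_pow g by blast
  qed
  then have "coprime b (int p)"
    using p prime_imp_coprime[of "int p" b] by (simp add: coprime_commute)
  then obtain u v where uv: "u * b + v * int p = 1"
    using bezout_int[of b "int p"] by auto
  have "x = x [^] (u * b + v * int p)" using x uv by simp
  also have "\<dots> = (x [^] b) [^] u \<otimes> (x [^] v) [^] int p"
    using x by (simp add: int_pow_mult int_pow_pow mult.commute)
  also have "(x [^] b) [^] u = g [^] (a * u)"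
    using g by (simp add: xg int_pow_pow)
  finally show ?thesis using x by (intro that[of "x [^] v"]) auto
qed

lemma nondivisible_at_decompose:
  assumes "nondivisible_at L n g" "n > 0" "x \<in> carrier L"
  obtains k y where "y \<in> carrier L" "x = g [^] (k::int) \<otimes> y [^] int n"
proof -
  have "n > 0 \<longrightarrow> nondivisible_at L n g
      \<longrightarrow> (\<forall>x\<in>carrier L. \<exists>k::int. \<exists>y\<in>carrier L. x = g [^] k \<otimes> y [^] int n)"
  proof (induction n rule: prime_divisors_induct)
    case (unit n)
    then show ?case unfolding nondivisible_at_def by (auto intro!: exI[of _ 0])
  next
    case (factor q n)
    show ?case
    proof (intro impI ballI)
      fix x assume "q * n > 0" "nondivisible_at L (q * n) g" "x \<in> carrier L"
      then have g: "g \<in> carrier L" "\<not> divisible_by L q g" "nondivisible_at L n g"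
        using factor.hyps nondivisible_at_dvd unfolding nondivisible_at_def by auto
      then obtain k :: int and y where y: "y \<in> carrier L" "x = g [^] k \<otimes> y [^] int n"
        using factor.IH \<open>q * n > 0\<close> \<open>x \<in> carrier L\<close> by auto
      obtain j z where z: "z \<in> carrier L" "y = g [^] (j::int) \<otimes> z [^] int q"
        using decompose_mod_prime[OF factor.hyps g(1,2) y(1)] by blast
      have "x = g [^] k \<otimes> (g [^] (j * int n) \<otimes> z [^] (int q * int n))"
        using y z g by (simp add: int_pow_distrib int_pow_pow)
      also have "\<dots> = g [^] (k + j * int n) \<otimes> z [^] int (q * n)"
        using g z by (simp add: int_pow_mult m_assoc)
      finally show "\<exists>k::int. \<exists>y\<in>carrier L. x = g [^] k \<otimes> y [^] int (q * n)"
        using z(1) by blast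
    qed
  qed simp
  then obtain k :: int and y where "y \<in> carrier L" "x = g [^] k \<otimes> y [^] int n"
    using assms by blast
  then show ?thesis by (rule that)
qed

lemma nondivisible_at_int_pow_dvd:
  assumes "nondivisible_at L n g" "n > 0" "y \<in> carrier L" "g [^] (k::int) = y [^] int n"
  shows "int n dvd k"
proof -
  have "n > 0 \<longrightarrow> nondivisible_at L n g
      \<longrightarrow> (\<forall>k::int. \<forall>y\<in>carrier L. g [^] k = y [^] int n \<longrightarrow> int n dvd k)"
  proof (induction n rule: prime_divisors_induct)
    case (factor q n)
    show ?case
    proof (intro impI allI ballI)
      fix k :: int and y assume "q * n > 0" "nondivisible_at L (q * n) g" and y: "y \<in> carrier L"
        and gk: "g [^] k = y [^] int (q * n)"
      then have g: "g \<in> carrier L" "\<not> divisible_by L q g" "nondivisible_at L n g"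
        using factor.hyps nondivisible_at_dvd unfolding nondivisible_at_def by auto
      have "int q dvd k"
      proof (rule ccontr)
        assume "\<not> int q dvd k"
        then have "coprime k (int q)"
          using factor.hyps prime_imp_coprime[of "int q" k] by (simp add: coprime_commute)
        moreover have "divisible_by L q (g [^] k)"
          using gk divisible_by_int_pow_mult[OF y, of q "int n"] by simp
        ultimately show False using divisible_by_of_coprime_int_pow g by blast
      qed
      then obtain k' where k': "k = int q * k'" ..
      have "(g [^] k') [^] int q = (y [^] int n) [^] int q"
        using gk g y k' by (simp add: int_pow_pow mult.commute)
      moreover have "int q \<noteq> 0" using prime_gt_0_nat[OF factor.hyps] by simp
      ultimately have "g [^] k' = y [^] int n"
        using int_pow_cancel[OF int_pow_closed[OF g(1)] int_pow_closed[OF y]] by blast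
      moreover have "n > 0" using \<open>q * n > 0\<close> by simp
      ultimately have "int n dvd k'" using factor.IH g(3) y by blast
      then show "int (q * n) dvd k" using k' by simp
    qed
  qed simp_all
  then show ?thesis using assms by blast
qed

lemma nondivisible_at_decompose_unique:
  assumes "nondivisible_at L n g" "n > 0" and y: "y \<in> carrier L" "y' \<in> carrier L"
    and eq: "g [^] (k::int) \<otimes> y [^] int n = g [^] (k'::int) \<otimes> y' [^] int n"
  shows "int n dvd k - k'"
proof -
  have g: "g \<in> carrier L" using assms(1) unfolding nondivisible_at_def by simp
  have "g [^] k \<otimes> inv (g [^] k') = y' [^] int n \<otimes> inv (y [^] int n)"
    using eq g y by (smt (verit, ccfv_threshold) int_pow_closed inv_closed inv_solve_left' m_closed
        m_comm m_lcomm)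
  then have "g [^] (k - k') = (y' \<otimes> inv y) [^] int n"
    using g y by (simp add: int_pow_diff int_pow_distrib int_pow_inv)
  then show ?thesis
    by (rule nondivisible_at_int_pow_dvd[OF assms(1,2), rotated]) (use y in simp)
qed

lemma hom_mod_proportional:
  assumes h1: "hom_mod L t h1" and h2: "hom_mod L t h2" and g: "nondivisible_at L t g" "t > 0"
    and unit: "coprime (h1 g) (int t)"
  shows "\<exists>c. \<forall>x\<in>carrier L. int t dvd h2 x - c * h1 x"
proof -
  obtain u v where uv: "u * h1 g + v * int t = 1"
    using bezout_int[of "h1 g" "int t"] unit by auto
  have "int t dvd h2 x - (u * h2 g) * h1 x" if x: "x \<in> carrier L" for x
  proof -
    obtain k :: int and y where y: "y \<in> carrier L" "x = g [^] k \<otimes> y [^] int t"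
      using nondivisible_at_decompose[OF g x] .
    have d1: "int t dvd h1 x - k * h1 g" and d2: "int t dvd h2 x - k * h2 g"
      using hom_mod_int_pow_mult[OF h1 _ y(1)] hom_mod_int_pow_mult[OF h2 _ y(1)] g y(2)
      unfolding nondivisible_at_def by auto
    have "int t dvd (h2 x - k * h2 g) - u * h2 g * (h1 x - k * h1 g) + k * h2 g * v * int t"
      by (rule dvd_add[OF dvd_diff[OF d2 dvd_mult[OF d1]]]) simp
    also have "(h2 x - k * h2 g) - u * h2 g * (h1 x - k * h1 g) + k * h2 g * v * int t
        = h2 x - (u * h2 g) * h1 x + k * h2 g * (u * h1 g + v * int t - 1)"
      by (simp add: algebra_simps)
    finally show ?thesis using uv by simp
  qed
  then show ?thesis by blast
qed

(* The exponent of x in L/L^n, generated by g; junk unless nondivisible_at L n g. *)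
definition index_mod :: "'a \<Rightarrow> nat \<Rightarrow> 'a \<Rightarrow> int" where
  "index_mod g n x = (SOME k. \<exists>y\<in>carrier L. x = g [^] k \<otimes> y [^] int n)"

lemma index_mod_decompose:
  assumes "nondivisible_at L n g" "n > 0" "x \<in> carrier L"
  shows "\<exists>y\<in>carrier L. x = g [^] index_mod g n x \<otimes> y [^] int n"
proof -
  obtain k :: int and y where "y \<in> carrier L" "x = g [^] k \<otimes> y [^] int n"
    using nondivisible_at_decompose[OF assms] .
  then show ?thesis
    unfolding index_mod_def
    by (intro someI_ex[where P = "\<lambda>k. \<exists>y\<in>carrier L. x = g [^] k \<otimes> y [^] int n"]) blast
qed

lemma index_mod_dvd_diff:
  assumes g: "nondivisible_at L n g" "n > 0" and y: "y \<in> carrier L"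
    and x: "x = g [^] (k::int) \<otimes> y [^] int n"
  shows "int n dvd k - index_mod g n x"
proof -
  have "x \<in> carrier L" using g y x unfolding nondivisible_at_def by simp
  then obtain y' where "y' \<in> carrier L" "x = g [^] index_mod g n x \<otimes> y' [^] int n"
    using index_mod_decompose[OF g] by blast
  then show ?thesis using nondivisible_at_decompose_unique[OF g y] x by simp
qed

lemma hom_mod_index_mod:
  assumes g: "nondivisible_at L n g" "n > 0"
  shows "hom_mod L n (index_mod g n)"
  unfolding hom_mod_def
proof (intro ballI)
  fix x x' assume x: "x \<in> carrier L" and x': "x' \<in> carrier L"
  obtain y where y: "y \<in> carrier L" "x = g [^] index_mod g n x \<otimes> y [^] int n"
    using index_mod_decompose[OF g x] by blast
  obtain y' where y': "y' \<in> carrier L" "x' = g [^] index_mod g n x' \<otimes> y' [^] int n"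
    using index_mod_decompose[OF g x'] by blast
  have g_carrier: "g \<in> carrier L" using g unfolding nondivisible_at_def by simp
  let ?i = "index_mod g n x" and ?i' = "index_mod g n x'"
  have "x \<otimes> x' = (g [^] ?i \<otimes> y [^] int n) \<otimes> (g [^] ?i' \<otimes> y' [^] int n)"
    using y(2) y'(2) by simp
  also have "\<dots> = (g [^] ?i \<otimes> g [^] ?i') \<otimes> (y [^] int n \<otimes> y' [^] int n)"
    using g_carrier y(1) y'(1) by (simp add: m_ac)
  also have "\<dots> = g [^] (?i + ?i') \<otimes> (y \<otimes> y') [^] int n"
    using g_carrier y(1) y'(1) by (simp add: int_pow_mult int_pow_distrib)
  finally have "x \<otimes> x' = g [^] (?i + ?i') \<otimes> (y \<otimes> y') [^] int n" .
  then have "int n dvd (index_mod g n x + index_mod g n x') - index_mod g n (x \<otimes> x')"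
    using index_mod_dvd_diff[OF g] y y' by simp
  then show "int n dvd index_mod g n (x \<otimes> x') - (index_mod g n x + index_mod g n x')"
    by (simp add: dvd_diff_commute)
qed

lemma index_mod_dvd_index_mod:
  assumes g: "nondivisible_at L n g" "m > 0" "m dvd n" "n > 0" and x: "x \<in> carrier L"
  shows "int m dvd index_mod g n x - index_mod g m x"
proof -
  obtain y where y: "y \<in> carrier L" "x = g [^] index_mod g n x \<otimes> y [^] int n"
    using index_mod_decompose[OF g(1,4) x] by blast
  then have "x = g [^] index_mod g n x \<otimes> (y [^] int (n div m)) [^] int m"
    using \<open>m dvd n\<close> by (simp add: int_pow_pow flip: of_nat_mult)
  then show ?thesis
    by (rule index_mod_dvd_diff[OF nondivisible_at_dvd[OF g(1,3)] g(2), rotated]) (use y in simp)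
qed

lemma index_mod_generator:
  assumes "nondivisible_at L n g" "n > 0"
  shows "int n dvd 1 - index_mod g n g"
  using index_mod_dvd_diff[OF assms one_closed, of g 1] assms(1)
  unfolding nondivisible_at_def by simp

end

section \<open>Generators of Hom(L, Zhat)\<close>

definition nonzero_mod_primes :: "('a, 'b) monoid_scheme \<Rightarrow> ('a \<Rightarrow> nat \<Rightarrow> int) \<Rightarrow> bool" where
  "nonzero_mod_primes L \<xi> \<longleftrightarrow>
     (\<forall>p. prime p \<longrightarrow> p \<notin> divisible_primes L \<longrightarrow> (\<exists>x\<in>carrier L. \<not> int p dvd \<xi> x p))"

(* Candidates for the n-th component of a in \<psi> = a \<xi>; the second clause forces the S-part
   of c to vanish, which makes c unique modulo n. *)
definition multiplier_mod ::
  "('a, 'b) monoid_scheme \<Rightarrow> ('a \<Rightarrow> nat \<Rightarrow> int) \<Rightarrow> ('a \<Rightarrow> nat \<Rightarrow> int) \<Rightarrow> nat \<Rightarrow> int \<Rightarrow> bool"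
where
  "multiplier_mod L \<xi> \<psi> n c \<longleftrightarrow> (\<forall>x\<in>carrier L. int n dvd \<psi> x n - c * \<xi> x n)
     \<and> (\<forall>d. d dvd n \<longrightarrow> (\<forall>p. prime p \<longrightarrow> p dvd d \<longrightarrow> p \<in> divisible_primes L) \<longrightarrow> int d dvd c)"

lemma multiplier_mod_dvd:
  assumes \<xi>: "zhat_hom L \<xi>" and \<psi>: "zhat_hom L \<psi>" and c: "multiplier_mod L \<xi> \<psi> n c"
    and m: "m > 0" "m dvd n" and n: "n > 0"
  shows "multiplier_mod L \<xi> \<psi> m c"
  unfolding multiplier_mod_def
proof (intro conjI ballI allI impI)
  fix x assume x: "x \<in> carrier L"
  have "int n dvd \<psi> x n - c * \<xi> x n"
    using c x unfolding multiplier_mod_def by blast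
  then have A: "int m dvd \<psi> x n - c * \<xi> x n"
    by (rule dvd_trans[rotated]) (simp add: m(2))
  have B: "int m dvd \<psi> x n - \<psi> x m" and C: "int m dvd \<xi> x n - \<xi> x m"
    using is_zhat_dvd_diff[OF zhat_hom_is_zhat[OF _ x] m n] \<psi> \<xi> by auto
  have "int m dvd (\<psi> x n - c * \<xi> x n) - (\<psi> x n - \<psi> x m) + c * (\<xi> x n - \<xi> x m)"
    by (rule dvd_add[OF dvd_diff[OF A B] dvd_mult[OF C]])
  then show "int m dvd \<psi> x m - c * \<xi> x m" by (simp add: algebra_simps)
next
  fix d assume "d dvd m" "\<forall>p. prime p \<longrightarrow> p dvd d \<longrightarrow> p \<in> divisible_primes L"
  then show "int d dvd c"
    using c dvd_trans[OF \<open>d dvd m\<close> m(2)] unfolding multiplier_mod_def by blast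
qed

context torsion_free_rank_le_one
begin

lemma exists_zhat_hom_one_mod_prime:
  assumes p: "prime p" "p \<notin> divisible_primes L"
  obtains \<psi> g where "zhat_hom L \<psi>" "g \<in> carrier L" "\<psi> g p = 1"
proof -
  have only_p: "q = p" if "prime q" "q dvd p ^ v" for q v
    using prime_dvd_power[OF that] primes_dvd_imp_eq[OF that(1) p(1)] by simp
  obtain g where g: "nondivisible_at L p g"
    by (rule exists_nondivisible_at[of p]) (use p prime_gt_0_nat only_p[of _ 1] in auto)
  have g_pow: "nondivisible_at L (p ^ v) g" for v
    unfolding nondivisible_at_def
  proof (intro conjI allI impI)
    show "g \<in> carrier L" using g unfolding nondivisible_at_def by simp
    fix q assume "prime q" "q dvd p ^ v"
    then have "q = p" by (rule only_p)
    then show "\<not> divisible_by L q g" using g p(1) unfolding nondivisible_at_def by simp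
  qed
  have hom: "hom_mod L (p ^ v) (index_mod g (p ^ v))" for v
    using hom_mod_index_mod[OF g_pow] p(1) by (simp add: prime_gt_0_nat)
  have compat: "int (p ^ v) dvd index_mod g (p ^ w) x - index_mod g (p ^ v) x"
    if "v \<le> w" "x \<in> carrier L" for v w x
    using index_mod_dvd_index_mod[OF g_pow[of w], of "p ^ v" x] that p(1)
    by (simp add: le_imp_power_dvd prime_gt_0_nat)
  obtain \<psi> where \<psi>: "zhat_hom L \<psi>"
    and \<psi>_p: "\<And>x. x \<in> carrier L \<Longrightarrow> \<psi> x p = index_mod g (p ^ 1) x mod int p"
    using zhat_hom_of_prime_power_family[where k = "\<lambda>v. index_mod g (p ^ v)", OF p(1) hom compat]
    by blast
  have "int p dvd 1 - index_mod g p g" using index_mod_generator[OF g] p(1) by (simp add: prime_gt_0_nat)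
  then have "index_mod g p g mod int p = 1 mod int p"
    by (simp add: mod_eq_dvd_iff dvd_diff_commute)
  then have "index_mod g p g mod int p = 1"
    using prime_gt_1_nat[OF p(1)] by simp
  moreover have g_carrier: "g \<in> carrier L" using g unfolding nondivisible_at_def by simp
  ultimately have "\<psi> g p = 1" using \<psi>_p by simp
  then show ?thesis by (rule that[OF \<psi> g_carrier])
qed

lemma zhat_generates_imp_nonzero_mod_primes:
  assumes "zhat_generates L \<xi>"
  shows "nonzero_mod_primes L \<xi>"
  unfolding nonzero_mod_primes_def
proof (intro allI impI)
  fix p assume p: "prime p" "p \<notin> divisible_primes L"
  obtain \<psi> g where \<psi>: "zhat_hom L \<psi>" "g \<in> carrier L" "\<psi> g p = 1"
    using exists_zhat_hom_one_mod_prime[OF p] .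
  then obtain a where "\<psi> g = zhat_mul a (\<xi> g)"
    using assms unfolding zhat_generates_def by blast
  then have "int p dvd \<xi> g p \<Longrightarrow> \<psi> g p = 0"
    using p(1) by (auto simp: zhat_mul_def)
  then show "\<exists>x\<in>carrier L. \<not> int p dvd \<xi> x p" using \<psi> by auto
qed

lemma nonzero_mod_primes_coprime:
  assumes \<xi>: "zhat_hom L \<xi>" and nz: "nonzero_mod_primes L \<xi>"
    and g: "nondivisible_at L t g" and t: "t > 0" "t dvd n" and n: "n > 0"
    and S: "\<And>p. prime p \<Longrightarrow> p dvd t \<Longrightarrow> p \<notin> divisible_primes L"
  shows "coprime (\<xi> g n) (int t)"
proof (rule coprime_int_if_no_common_prime_factor[OF t(1)])
  fix p assume p: "prime p" "p dvd t"
  show "\<not> int p dvd \<xi> g n"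
  proof
    assume "int p dvd \<xi> g n"
    obtain x where x: "x \<in> carrier L" "\<not> int p dvd \<xi> x p"
      using nz p S unfolding nonzero_mod_primes_def by blast
    obtain k :: int and y where y: "y \<in> carrier L" "x = g [^] k \<otimes> y [^] int t"
      using nondivisible_at_decompose[OF g t(1) x(1)] .
    have "hom_mod L t (\<lambda>x. \<xi> x n)"
      using hom_mod_dvd[OF zhat_hom_component_hom_mod[OF \<xi> n] t(2)] .
    then have "int t dvd \<xi> x n - k * \<xi> g n"
      using hom_mod_int_pow_mult[of t _ g y k] g y unfolding nondivisible_at_def by simp
    then have "int p dvd (\<xi> x n - k * \<xi> g n) + k * \<xi> g n"
      using p(2) \<open>int p dvd \<xi> g n\<close> by (meson dvd_add dvd_mult dvd_trans int_dvd_int_iff)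
    then have "int p dvd \<xi> x n" by simp
    moreover have "int p dvd \<xi> x n - \<xi> x p"
      using is_zhat_dvd_diff[OF zhat_hom_is_zhat[OF \<xi> x(1)] prime_gt_0_nat[OF p(1)]
          dvd_trans[OF p(2) t(2)] n] .
    ultimately have "int p dvd \<xi> x n - (\<xi> x n - \<xi> x p)"
      by (rule dvd_diff)
    then show False using x(2) by simp
  qed
qed

lemma split_with_nondivisible:
  assumes \<xi>: "zhat_hom L \<xi>" and nz: "nonzero_mod_primes L \<xi>" and n: "n > 0"
  obtains s t g where "n = s * t" "\<And>p. prime p \<Longrightarrow> p dvd s \<Longrightarrow> p \<in> divisible_primes L"
    "\<And>p. prime p \<Longrightarrow> p dvd t \<Longrightarrow> p \<notin> divisible_primes L"
    "nondivisible_at L t g" "coprime (\<xi> g n) (int t)" "coprime (int s) (int t)"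
proof -
  obtain s t where st: "n = s * t" and s: "\<And>p. prime p \<Longrightarrow> p dvd s \<Longrightarrow> p \<in> divisible_primes L"
    and t: "\<And>p. prime p \<Longrightarrow> p dvd t \<Longrightarrow> p \<notin> divisible_primes L"
    using prime_factors_split[OF n] by metis
  have "t > 0" "t dvd n" using st n by auto
  obtain g where g: "nondivisible_at L t g"
    using exists_nondivisible_at[OF \<open>t > 0\<close> t] .
  have "coprime (int s) (int t)"
    using coprime_int_if_prime_factors_separated[OF \<open>t > 0\<close> s t] .
  then show ?thesis
    using that st s t g nonzero_mod_primes_coprime[OF \<xi> nz g \<open>t > 0\<close> \<open>t dvd n\<close> n t] by blast
qed

lemma multiplier_mod_exists:
  assumes \<xi>: "zhat_hom L \<xi>" and nz: "nonzero_mod_primes L \<xi>" and \<psi>: "zhat_hom L \<psi>" and n: "n > 0"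
  shows "\<exists>c. multiplier_mod L \<xi> \<psi> n c"
proof -
  obtain s t g where st: "n = s * t" and s: "\<And>p. prime p \<Longrightarrow> p dvd s \<Longrightarrow> p \<in> divisible_primes L"
    and t: "\<And>p. prime p \<Longrightarrow> p dvd t \<Longrightarrow> p \<notin> divisible_primes L"
    and g: "nondivisible_at L t g" and unit: "coprime (\<xi> g n) (int t)"
    and coprime_st: "coprime (int s) (int t)"
    using split_with_nondivisible[OF \<xi> nz n] by blast
  have "s > 0" "t > 0" "s dvd n" "t dvd n" using st n by auto
  obtain b where b: "\<forall>x\<in>carrier L. int t dvd \<psi> x n - b * \<xi> x n"
    using hom_mod_proportional[OF hom_mod_dvd[OF zhat_hom_component_hom_mod[OF \<xi> n] \<open>t dvd n\<close>]
        hom_mod_dvd[OF zhat_hom_component_hom_mod[OF \<psi> n] \<open>t dvd n\<close>] g \<open>t > 0\<close> unit] by blast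
  obtain e where e: "int t dvd e - 1" "int s dvd e"
    using exists_crt_idempotent[of "int t" "int s"] coprime_st by (auto simp: coprime_commute)
  define c where "c = e * b"
  have "int n dvd \<psi> x n - c * \<xi> x n" if x: "x \<in> carrier L" for x
  proof -
    have "int t dvd \<psi> x n - b * \<xi> x n" "int t dvd (e - 1) * (b * \<xi> x n)"
      using b x e(1) by auto
    then have "int t dvd (\<psi> x n - b * \<xi> x n) - (e - 1) * (b * \<xi> x n)"
      by (rule dvd_diff)
    then have dvd_t: "int t dvd \<psi> x n - c * \<xi> x n"
      by (simp add: c_def algebra_simps)
    have "int s dvd \<psi> x n"
      using hom_mod_vanishes_on_divisible_part[OF zhat_hom_component_hom_mod[OF \<psi> n]
          \<open>s dvd n\<close> \<open>s > 0\<close> s x] .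
    then have dvd_s: "int s dvd \<psi> x n - c * \<xi> x n" unfolding c_def using e(2) by simp
    show ?thesis using divides_mult[OF dvd_s dvd_t coprime_st] st by simp
  qed
  moreover have "int d dvd c"
    if "d dvd n" and d: "\<And>p. prime p \<Longrightarrow> p dvd d \<Longrightarrow> p \<in> divisible_primes L" for d
  proof -
    have "coprime (int d) (int t)"
      using coprime_int_if_prime_factors_separated[OF \<open>t > 0\<close> d t] .
    moreover have "int d dvd int s * int t"
      using \<open>d dvd n\<close> st by (metis int_dvd_int_iff of_nat_mult)
    ultimately have "int d dvd int s" by (simp add: coprime_dvd_mult_left_iff)
    then show ?thesis unfolding c_def using e(2) by (meson dvd_trans dvd_mult2)
  qed
  ultimately show ?thesis unfolding multiplier_mod_def by blast
qed

lemma multiplier_mod_unique: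
  assumes \<xi>: "zhat_hom L \<xi>" and nz: "nonzero_mod_primes L \<xi>" and n: "n > 0"
    and c1: "multiplier_mod L \<xi> \<psi> n c1" and c2: "multiplier_mod L \<xi> \<psi> n c2"
  shows "int n dvd c1 - c2"
proof -
  obtain s t g where st: "n = s * t" and s: "\<And>p. prime p \<Longrightarrow> p dvd s \<Longrightarrow> p \<in> divisible_primes L"
    and "\<And>p. prime p \<Longrightarrow> p dvd t \<Longrightarrow> p \<notin> divisible_primes L"
    and g: "nondivisible_at L t g" and unit: "coprime (\<xi> g n) (int t)"
    and coprime_st: "coprime (int s) (int t)"
    using split_with_nondivisible[OF \<xi> nz n] by blast
  have g_carrier: "g \<in> carrier L" using g unfolding nondivisible_at_def by simp
  have "int n dvd \<psi> g n - c1 * \<xi> g n" "int n dvd \<psi> g n - c2 * \<xi> g n"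
    using c1 c2 g_carrier unfolding multiplier_mod_def by auto
  then have "int n dvd (\<psi> g n - c2 * \<xi> g n) - (\<psi> g n - c1 * \<xi> g n)"
    by (intro dvd_diff[of _ "\<psi> g n - c2 * \<xi> g n"])
  moreover have "(\<psi> g n - c2 * \<xi> g n) - (\<psi> g n - c1 * \<xi> g n) = (c1 - c2) * \<xi> g n"
    by (simp add: algebra_simps)
  moreover have "int t dvd int n" using st by simp
  ultimately have "int t dvd (c1 - c2) * \<xi> g n" by (metis dvd_trans)
  then have dvd_t: "int t dvd c1 - c2"
    using unit by (simp add: coprime_commute coprime_dvd_mult_left_iff)
  have "s dvd n" "\<forall>p. prime p \<longrightarrow> p dvd s \<longrightarrow> p \<in> divisible_primes L"
    using st s by auto
  then have "int s dvd c1" "int s dvd c2"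
    using c1 c2 unfolding multiplier_mod_def by blast+
  then have dvd_s: "int s dvd c1 - c2" by (rule dvd_diff)
  show ?thesis using divides_mult[OF dvd_s dvd_t coprime_st] st by simp
qed

lemma nonzero_mod_primes_imp_zhat_generates:
  assumes \<xi>: "zhat_hom L \<xi>" and nz: "nonzero_mod_primes L \<xi>"
  shows "zhat_generates L \<xi>"
  unfolding zhat_generates_def
proof (intro allI impI)
  fix \<psi> assume \<psi>: "zhat_hom L \<psi>"
  define c where "c n = (SOME c. multiplier_mod L \<xi> \<psi> n c)" for n
  have c: "multiplier_mod L \<xi> \<psi> n (c n)" if "n > 0" for n
    using someI_ex[OF multiplier_mod_exists[OF \<xi> nz \<psi> that]] unfolding c_def .
  have "int m dvd c n - c m" if m: "m > 0" and mn: "m dvd n" and n: "n > 0" for m n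
    using multiplier_mod_unique[OF \<xi> nz m multiplier_mod_dvd[OF \<xi> \<psi> c[OF n] m mn n] c[OF m]] .
  then have a: "is_zhat (\<lambda>n. if n = 0 then 0 else c n mod int n)"
    by (rule is_zhat_of_compatible)
  have "\<psi> x = zhat_mul (\<lambda>n. if n = 0 then 0 else c n mod int n) (\<xi> x)" if x: "x \<in> carrier L" for x
  proof
    fix n
    have "is_zhat (\<psi> x)" using zhat_hom_is_zhat[OF \<psi> x] .
    show "\<psi> x n = zhat_mul (\<lambda>n. if n = 0 then 0 else c n mod int n) (\<xi> x) n"
    proof (cases "n = 0")
      case True
      then show ?thesis using \<open>is_zhat (\<psi> x)\<close> unfolding is_zhat_def zhat_mul_def by simp
    next
      case False
      then have "\<psi> x n mod int n = (c n * \<xi> x n) mod int n"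
        using c x unfolding multiplier_mod_def by (simp add: mod_eq_dvd_iff)
      moreover have "0 \<le> \<psi> x n \<and> \<psi> x n < int n"
        using \<open>is_zhat (\<psi> x)\<close> False unfolding is_zhat_def by blast
      then have "\<psi> x n mod int n = \<psi> x n" by simp
      ultimately show ?thesis using False unfolding zhat_mul_def by (simp add: mod_mult_left_eq)
    qed
  qed
  then show "\<exists>a. is_zhat a \<and> (\<forall>x\<in>carrier L. \<psi> x = zhat_mul a (\<xi> x))" using a by blast
qed

lemma zhat_generates_iff_nonzero_mod_primes:
  assumes "zhat_hom L \<xi>"
  shows "zhat_generates L \<xi> \<longleftrightarrow> nonzero_mod_primes L \<xi>"
  using zhat_generates_imp_nonzero_mod_primes nonzero_mod_primes_imp_zhat_generates[OF assms]
  by blast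

end

section \<open>The dual map\<close>

lemma dual_map_qz_add:
  assumes "zhat_hom L \<xi>"
  shows "dual_map L \<xi> (qz_add r s) = dual_add L (dual_map L \<xi> r) (dual_map L \<xi> s)"
  using assms unfolding dual_map_def dual_add_def
  by (auto simp: zhat_act_qz_add zhat_hom_is_zhat)

lemma (in monoid) dual_map_in_tor_dual:
  assumes "zhat_hom G \<xi>"
  shows "dual_map G \<xi> r \<in> tor_dual G"
proof -
  have "dual_map G \<xi> r \<in> pontryagin_dual G"
    using assms unfolding pontryagin_dual_def dual_map_def zhat_hom_def
    by (auto simp: zhat_act_in_QZ zhat_act_zhat_add)
  moreover have "\<forall>x\<in>carrier G. frac (of_nat (qz_den r) * dual_map G \<xi> r x) = 0"
    unfolding dual_map_def by (simp add: qz_den_mult_zhat_act_in_Ints)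
  ultimately show ?thesis unfolding tor_dual_def using qz_den_pos by blast
qed

lemma dual_map_inverse_eq_zero:
  assumes \<xi>: "zhat_hom L \<xi>" and "n > 0" and dvd: "\<forall>x\<in>carrier L. int n dvd \<xi> x n"
  shows "dual_map L \<xi> (1 / of_nat n) = dual_map L \<xi> 0"
proof
  fix x
  show "dual_map L \<xi> (1 / of_nat n) x = dual_map L \<xi> 0 x"
  proof (cases "x \<in> carrier L")
    case True
    have "of_int (\<xi> x n) * (1 / of_nat n) \<in> (\<int> :: rat set)"
      using dvd True of_int_div_of_int_in_Ints_iff[of "\<xi> x n" "int n"] by simp
    then show ?thesis
      using True zhat_act_eq_frac[OF zhat_hom_is_zhat[OF \<xi> True] \<open>n > 0\<close> qz_den_inverse_dvd]
      unfolding dual_map_def by simp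
  qed (simp add: dual_map_def)
qed

lemma inj_on_dual_map_imp_nonzero_mod_primes:
  assumes \<xi>: "zhat_hom L \<xi>" and inj: "inj_on (dual_map L \<xi>) (mu_S (divisible_primes L))"
  shows "nonzero_mod_primes L \<xi>"
  unfolding nonzero_mod_primes_def
proof (intro allI impI)
  fix p assume p: "prime p" "p \<notin> divisible_primes L"
  show "\<exists>x\<in>carrier L. \<not> int p dvd \<xi> x p"
  proof (rule ccontr)
    assume "\<not> ?thesis"
    then have "dual_map L \<xi> (1 / of_nat p) = dual_map L \<xi> 0"
      using dual_map_inverse_eq_zero[OF \<xi> prime_gt_0_nat[OF p(1)]] by blast
    moreover have "\<forall>q\<in>divisible_primes L. prime q" unfolding divisible_primes_def by blast
    then have "1 / of_nat p \<in> mu_S (divisible_primes L)"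
      by (rule inverse_prime_in_mu_S[OF p])
    moreover have "0 \<in> mu_S (divisible_primes L)"
      unfolding mu_S_def QZ_def by simp
    ultimately have "1 / (of_nat p :: rat) = 0" using inj_onD[OF inj] by blast
    then show False using p(1) by simp
  qed
qed

lemma nonzero_mod_primes_imp_inj_on_dual_map:
  assumes \<xi>: "zhat_hom L \<xi>" and nz: "nonzero_mod_primes L \<xi>"
  shows "inj_on (dual_map L \<xi>) (mu_S (divisible_primes L))"
proof (rule inj_onI)
  fix r s assume r: "r \<in> mu_S (divisible_primes L)" and s: "s \<in> mu_S (divisible_primes L)"
    and eq: "dual_map L \<xi> r = dual_map L \<xi> s"
  define N where "N = qz_den r * qz_den s"
  define d where "d = qz_den (r - s)"
  have "N > 0" by (simp add: N_def qz_den_pos)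
  have "d dvd N" unfolding d_def N_def by (rule qz_den_diff_dvd)
  have d_dvd_\<xi>: "int d dvd \<xi> x N" if x: "x \<in> carrier L" for x
  proof -
    have "zhat_act (\<xi> x) r = zhat_act (\<xi> x) s"
      using fun_cong[OF eq, of x] x unfolding dual_map_def by simp
    then have "frac (of_int (\<xi> x N) * r) = frac (of_int (\<xi> x N) * s)"
      using zhat_act_eq_frac[OF zhat_hom_is_zhat[OF \<xi> x] \<open>N > 0\<close>] N_def by simp
    then have "of_int (\<xi> x N) * (r - s) \<in> \<int>"
      unfolding frac_eq_frac_iff by (simp add: right_diff_distrib)
    then show ?thesis unfolding d_def of_int_mult_in_Ints_iff_qz_den_dvd .
  qed
  show "r = s"
  proof (rule ccontr)
    assume "r \<noteq> s"
    then have "d \<noteq> 1"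
      using QZ_eq_if_diff_in_Ints r s of_nat_mult_in_Ints_iff_qz_den_dvd[of 1 "r - s"]
      unfolding d_def mu_S_def by auto
    then obtain p where p: "prime p" "p dvd d" using prime_factor_nat by blast
    have "p dvd N" using p(2) \<open>d dvd N\<close> by (rule dvd_trans)
    then have "p \<notin> divisible_primes L"
      using prime_dvd_qz_den_notin r s p(1) unfolding N_def by (auto simp: prime_dvd_mult_iff)
    then obtain x where x: "x \<in> carrier L" "\<not> int p dvd \<xi> x p"
      using nz p(1) unfolding nonzero_mod_primes_def by blast
    have "int p dvd \<xi> x N"
      using dvd_trans[OF _ d_dvd_\<xi>[OF x(1)]] p(2) by simp
    moreover have "int p dvd \<xi> x N - \<xi> x p"
      using is_zhat_dvd_diff[OF zhat_hom_is_zhat[OF \<xi> x(1)] prime_gt_0_nat[OF p(1)] \<open>p dvd N\<close> \<open>N > 0\<close>] .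
    ultimately have "int p dvd \<xi> x N - (\<xi> x N - \<xi> x p)" by (rule dvd_diff)
    then show False using x(2) by simp
  qed
qed

lemma hom_mod_floor_pontryagin_dual:
  assumes f: "f \<in> pontryagin_dual L" and int: "\<forall>x\<in>carrier L. of_nat n * f x \<in> \<int>"
  shows "hom_mod L n (\<lambda>x. \<lfloor>of_nat n * f x\<rfloor>)"
  unfolding hom_mod_def
proof (intro ballI)
  fix x y assume x: "x \<in> carrier L" and y: "y \<in> carrier L"
  have of_floor: "of_nat n * f z = of_int \<lfloor>of_nat n * f z\<rfloor>" if "z \<in> carrier L" for z
    using int that by (metis Ints_cases floor_of_int)
  have "f (x \<otimes>\<^bsub>L\<^esub> y) = f x + f y - of_int \<lfloor>f x + f y\<rfloor>"
    using f x y unfolding pontryagin_dual_def qz_add_def frac_def by simp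
  then have "of_nat n * f (x \<otimes>\<^bsub>L\<^esub> y) = of_nat n * (f x + f y - of_int \<lfloor>f x + f y\<rfloor>)"
    by (rule arg_cong)
  also have "\<dots> = of_nat n * f x + of_nat n * f y - of_nat n * of_int \<lfloor>f x + f y\<rfloor>"
    by (simp only: ring_distribs)
  also have "\<dots> = of_int (\<lfloor>of_nat n * f x\<rfloor> + \<lfloor>of_nat n * f y\<rfloor> - int n * \<lfloor>f x + f y\<rfloor>)"
    using of_floor[OF x] of_floor[OF y] by simp
  finally have "\<lfloor>of_nat n * f (x \<otimes>\<^bsub>L\<^esub> y)\<rfloor>
      = \<lfloor>of_nat n * f x\<rfloor> + \<lfloor>of_nat n * f y\<rfloor> - int n * \<lfloor>f x + f y\<rfloor>"
    by (simp only: floor_of_int)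
  then show "int n dvd \<lfloor>of_nat n * f (x \<otimes>\<^bsub>L\<^esub> y)\<rfloor> - (\<lfloor>of_nat n * f x\<rfloor> + \<lfloor>of_nat n * f y\<rfloor>)"
    by simp
qed

lemma pontryagin_dual_eq_dual_map:
  assumes \<xi>: "zhat_hom L \<xi>" and f: "f \<in> pontryagin_dual L" and n: "n > 0"
    and int: "\<forall>x\<in>carrier L. of_nat n * f x \<in> \<int>"
    and c: "\<forall>x\<in>carrier L. int n dvd \<lfloor>of_nat n * f x\<rfloor> - c * \<xi> x n"
  shows "f = dual_map L \<xi> (of_int (c mod int n) / of_nat n)"
proof
  fix x
  define r :: rat where "r = of_int (c mod int n) / of_nat n"
  have nr: "of_nat n * r = of_int (c mod int n)" using n by (simp add: r_def)
  then have den_r: "qz_den r dvd n" unfolding of_nat_mult_in_Ints_iff_qz_den_dvd[symmetric] by simp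
  show "f x = dual_map L \<xi> r x"
  proof (cases "x \<in> carrier L")
    case False
    then show ?thesis using f unfolding pontryagin_dual_def dual_map_def by simp
  next
    case True
    have "int n dvd (c mod int n - c) * \<xi> x n"
      by (simp add: mod_eq_dvd_iff[symmetric])
    moreover have "int n dvd \<lfloor>of_nat n * f x\<rfloor> - c * \<xi> x n" using c True by blast
    ultimately have "int n dvd (c mod int n - c) * \<xi> x n - (\<lfloor>of_nat n * f x\<rfloor> - c * \<xi> x n)"
      by (rule dvd_diff)
    then have "int n dvd \<xi> x n * (c mod int n) - \<lfloor>of_nat n * f x\<rfloor>"
      by (simp add: algebra_simps)
    then obtain j where j: "\<xi> x n * (c mod int n) - \<lfloor>of_nat n * f x\<rfloor> = int n * j" ..
    obtain \<phi> where nf: "of_nat n * f x = of_int \<phi>"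
      using int True by (metis Ints_cases)
    have "of_nat n * (of_int (\<xi> x n) * r - f x) = of_int (\<xi> x n) * (of_nat n * r) - of_nat n * f x"
      by (simp add: algebra_simps)
    also have "\<dots> = of_int (\<xi> x n * (c mod int n) - \<lfloor>of_nat n * f x\<rfloor>)"
      unfolding nr nf by simp
    also have "\<dots> = of_nat n * of_int j"
      unfolding j by simp
    finally have "of_int (\<xi> x n) * r - f x \<in> \<int>" using n by simp
    then have "frac (of_int (\<xi> x n) * r) = frac (f x)"
      unfolding frac_eq_frac_iff .
    also have "frac (f x) = f x"
      using f True unfolding pontryagin_dual_def QZ_def by (simp add: frac_eq)
    finally show ?thesis
      using zhat_act_eq_frac[OF zhat_hom_is_zhat[OF \<xi> True] n den_r] True
      unfolding dual_map_def by simp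
  qed
qed

lemma (in monoid) pontryagin_dual_nat_pow:
  assumes f: "f \<in> pontryagin_dual G" and y: "y \<in> carrier G"
  shows "f (y [^] (k::nat)) - of_nat k * f y \<in> \<int>"
proof (induction k)
  case 0
  have "f (\<one> \<otimes> \<one>) = qz_add (f \<one>) (f \<one>)"
    using f one_closed unfolding pontryagin_dual_def by blast
  then have "f \<one> = of_int \<lfloor>f \<one> + f \<one>\<rfloor>"
    unfolding qz_add_def frac_def by simp
  then have "f \<one> \<in> \<int>" by (metis Ints_of_int)
  then show ?case by simp
next
  case (Suc k)
  have "f (y [^] Suc k) = qz_add (f (y [^] k)) (f y)"
    using f y unfolding pontryagin_dual_def by simp
  then have "f (y [^] Suc k) - of_nat (Suc k) * f y
      = (f (y [^] k) - of_nat k * f y) - of_int \<lfloor>f (y [^] k) + f y\<rfloor>"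
    unfolding qz_add_def frac_def by (simp add: algebra_simps)
  then show ?case using Suc.IH by simp
qed

lemma (in comm_group) tor_dual_order:
  assumes "f \<in> tor_dual G"
  shows "\<exists>n>0. (\<forall>p. prime p \<longrightarrow> p dvd n \<longrightarrow> p \<notin> divisible_primes G)
    \<and> (\<forall>x\<in>carrier G. of_nat n * f x \<in> \<int>)"
proof -
  have f: "f \<in> pontryagin_dual G" using assms unfolding tor_dual_def by simp
  obtain N where N: "N > 0" "\<forall>x\<in>carrier G. of_nat N * f x \<in> \<int>"
    using assms unfolding tor_dual_def by auto
  obtain s t where st: "N = s * t" and s: "\<And>p. prime p \<Longrightarrow> p dvd s \<Longrightarrow> p \<in> divisible_primes G"
    and t: "\<And>p. prime p \<Longrightarrow> p dvd t \<Longrightarrow> p \<notin> divisible_primes G"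
    using prime_factors_split[OF N(1)] by metis
  have "s > 0" "t > 0" using st N(1) by auto
  have "of_nat t * f x \<in> \<int>" if x: "x \<in> carrier G" for x
  proof -
    obtain y where y: "y \<in> carrier G" "y [^] s = x"
      using divisible_by_prime_factors[OF \<open>s > 0\<close> s x] unfolding divisible_by_def by blast
    have "of_nat t * f x = of_nat t * (f (y [^] s) - of_nat s * f y) + of_nat N * f y"
      using y st by (simp add: algebra_simps)
    also have "\<dots> \<in> \<int>"
      using pontryagin_dual_nat_pow[OF f y(1)] N(2) y(1) by (simp add: Ints_add Ints_mult)
    finally show ?thesis .
  qed
  then show ?thesis using \<open>t > 0\<close> t by blast
qed

context torsion_free_rank_le_one
begin

lemma tor_dual_subset_dual_map_image:
  assumes \<xi>: "zhat_hom L \<xi>" and nz: "nonzero_mod_primes L \<xi>"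
  shows "tor_dual L \<subseteq> dual_map L \<xi> ` mu_S (divisible_primes L)"
proof
  fix f assume "f \<in> tor_dual L"
  then have f: "f \<in> pontryagin_dual L" unfolding tor_dual_def by simp
  obtain n where n: "n > 0" and S: "\<forall>p. prime p \<longrightarrow> p dvd n \<longrightarrow> p \<notin> divisible_primes L"
    and int: "\<forall>x\<in>carrier L. of_nat n * f x \<in> \<int>"
    using tor_dual_order[OF \<open>f \<in> tor_dual L\<close>] by blast
  obtain g where g: "nondivisible_at L n g"
    using exists_nondivisible_at[OF n] S by blast
  have "coprime (\<xi> g n) (int n)"
    using nonzero_mod_primes_coprime[OF \<xi> nz g n dvd_refl n] S by blast
  then obtain c where c: "\<forall>x\<in>carrier L. int n dvd \<lfloor>of_nat n * f x\<rfloor> - c * \<xi> x n"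
    using hom_mod_proportional[OF zhat_hom_component_hom_mod[OF \<xi> n]
        hom_mod_floor_pontryagin_dual[OF f int] g n] by blast
  have "\<forall>q\<in>divisible_primes L. coprime q n"
    using S prime_imp_coprime unfolding divisible_primes_def by blast
  then show "f \<in> dual_map L \<xi> ` mu_S (divisible_primes L)"
    using pontryagin_dual_eq_dual_map[OF \<xi> f n int c] mod_div_in_mu_S[OF n] by blast
qed
lemma bij_betw_dual_map_iff_nonzero_mod_primes:
  assumes \<xi>: "zhat_hom L \<xi>"
  shows "bij_betw (dual_map L \<xi>) (mu_S (divisible_primes L)) (tor_dual L)
    \<longleftrightarrow> nonzero_mod_primes L \<xi>"
proof
  assume "bij_betw (dual_map L \<xi>) (mu_S (divisible_primes L)) (tor_dual L)"
  then show "nonzero_mod_primes L \<xi>"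
    using inj_on_dual_map_imp_nonzero_mod_primes[OF \<xi>] unfolding bij_betw_def by blast
next
  assume nz: "nonzero_mod_primes L \<xi>"
  show "bij_betw (dual_map L \<xi>) (mu_S (divisible_primes L)) (tor_dual L)"
    unfolding bij_betw_def
    using nonzero_mod_primes_imp_inj_on_dual_map[OF \<xi> nz] dual_map_in_tor_dual[OF \<xi>]
      tor_dual_subset_dual_map_image[OF \<xi> nz] by blast
qed

end

theorem proposition8p9:
  fixes L :: "('a, 'b) monoid_scheme" and \<xi> :: "'a \<Rightarrow> nat \<Rightarrow> int"
  assumes "torsion_free_rank1 L"
    and "zhat_hom L \<xi>"
  shows "zhat_generates L \<xi> \<longleftrightarrow>
    (bij_betw (dual_map L \<xi>) (mu_S (divisible_primes L)) (tor_dual L)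
     \<and> (\<forall>r\<in>mu_S (divisible_primes L). \<forall>s\<in>mu_S (divisible_primes L).
          dual_map L \<xi> (qz_add r s) = dual_add L (dual_map L \<xi> r) (dual_map L \<xi> s)))"
proof -
  interpret torsion_free_rank_le_one L
    using assms(1) by (rule torsion_free_rank1_imp_rank_le_one)
  show ?thesis
    using zhat_generates_iff_nonzero_mod_primes[OF assms(2)]
      bij_betw_dual_map_iff_nonzero_mod_primes[OF assms(2)] dual_map_qz_add[OF assms(2)]
    by blast
qed

end
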